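(* Let $p_1,p_2\in\mathbb{Z}^3$ be distinct, and let $\pi_1,\pi_2$ be two distinct integer affine planes in $\mathbb{R}^3$, both containing the line through $p_1$ and $p_2$ and neither containing the origin $O$. Then for arbitrary $p_3\in\pi_1\setminus\pi_2$ and $p_4\in\pi_2\setminus\pi_1$, \[ |\omega(p_1,p_2;p_3,p_4)|=\frac{{\rm Isin}(\pi_1,\pi_2)}{{\rm I}\ell(p_1,p_2)\,{\rm Id}(O,\pi_1)\,{\rm Id}(O,\pi_2)} . \]
   Context: $\omega(p_1,p_2;p_3,p_4)=\det(p_2-p_1,p_3-p_1,p_4-p_1)/(\det(p_1,p_2,p_3)\det(p_1,p_2,p_4))$, where $\det(u,v,w)$ is the determinant of the matrix with columns $u,v,w$. An integer plane is an affine plane containing a full-rank integer sublattice. ${\rm I}\ell(p,q)$ (integer length) is the number of integer points in the interior of segment $pq$ plus one. ${\rm Id}(p,\pi)$ (integer distance from integer point $p$ to integer plane $\pi$) is the index of the sublattice generated by all integer vectors with endpoints in $\{p\}\cup\pi$ in the lattice of integer vectors of the affine span of $p$ and $\pi$. ${\rm Isin}(\pi_1,\pi_2)$ (integer sine) is the index of the sublattice generated by all integer vectors of $\pi_1$ and of $\pi_2$ in the lattice of integer vectors of the affine span of $\pi_1\cup\pi_2$. *)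

theory Defs
  imports "HOL-Analysis.Analysis"
begin

type_synonym pt = "real^3"

definition int_pt :: "pt \<Rightarrow> bool" where
  "int_pt x \<longleftrightarrow> (\<forall>i. x $ i \<in> \<int>)"

definition det3 :: "pt \<Rightarrow> pt \<Rightarrow> pt \<Rightarrow> real" where
  "det3 u v w = det (transpose (vector [u, v, w] :: real^3^3))"

definition omega :: "pt \<Rightarrow> pt \<Rightarrow> pt \<Rightarrow> pt \<Rightarrow> real" where
  "omega p1 p2 p3 p4 =
     det3 (p2 - p1) (p3 - p1) (p4 - p1) / (det3 p1 p2 p3 * det3 p1 p2 p4)"

text \<open>Integer plane: an affine plane whose integer points affinely span it
  (i.e. it contains a full-rank integer sublattice).\<close>
definition integer_plane :: "pt set \<Rightarrow> bool" where
  "integer_plane P \<longleftrightarrow> affine P \<and> aff_dim P = 2 \<and>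
     affine hull {x \<in> P. int_pt x} = P"

definition int_vecs :: "pt set \<Rightarrow> pt set" where
  "int_vecs S = {x - y | x y. x \<in> S \<and> y \<in> S \<and> int_pt x \<and> int_pt y}"

definition int_span :: "pt set \<Rightarrow> pt set" where
  "int_span S = {(\<Sum>v\<in>F. of_int (c v) *\<^sub>R v) | F c. finite F \<and> F \<subseteq> S}"

definition lattice_index :: "pt set \<Rightarrow> pt set \<Rightarrow> nat" where
  "lattice_index L M = card ((\<lambda>x. {y \<in> M. x - y \<in> L}) ` M)"

definition int_length :: "pt \<Rightarrow> pt \<Rightarrow> nat" where
  "int_length p q = card {x \<in> open_segment p q. int_pt x} + 1"

definition int_dist :: "pt \<Rightarrow> pt set \<Rightarrow> nat" where
  "int_dist p P = lattice_index (int_span (int_vecs (insert p P)))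
                                (int_vecs (affine hull (insert p P)))"

definition int_sin :: "pt set \<Rightarrow> pt set \<Rightarrow> nat" where
  "int_sin P1 P2 = lattice_index (int_span (int_vecs P1 \<union> int_vecs P2))
                                 (int_vecs (affine hull (P1 \<union> P2)))"

end

theory Submission
  imports Defs "HOL-Analysis.Cross3"
begin

text \<open>Write \<open>P\<^sub>i = {x. n\<^sub>i \<bullet> x = e\<^sub>i}\<close> with primitive integer normals \<open>n\<^sub>i\<close>, and
  \<open>p\<^sub>2 - p\<^sub>1 = l v\<close> with \<open>v\<close> primitive. Then \<open>Il(p\<^sub>1, p\<^sub>2) = l\<close>, and since \<open>n\<^sub>i \<bullet> _\<close> maps
  the integer lattice onto \<open>\<int>\<close>, \<open>Id(O, P\<^sub>i) = |e\<^sub>i|\<close>. The values of \<open>n\<^sub>1 \<bullet> _\<close> on the integer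
  vectors of \<open>P\<^sub>2\<close> form a group \<open>g\<int>\<close>; the lattice spanned by both planes is then
  \<open>{z. g dvd n\<^sub>1 \<bullet> z}\<close>, so \<open>Isin(P\<^sub>1, P\<^sub>2) = g\<close>. If \<open>u\<close> is an integer vector of \<open>P\<^sub>2\<close> with
  \<open>n\<^sub>1 \<bullet> u = g\<close>, then \<open>v, u\<close> is a basis of the integer vectors of \<open>P\<^sub>2\<close>, hence
  \<open>v \<times> u = \<plusminus>n\<^sub>2\<close>. Writing \<open>p\<^sub>4 - p\<^sub>1 = \<alpha> v + \<beta> u\<close>, the three determinants in \<open>\<omega>\<close> become
  products of \<open>e\<^sub>1\<close>, \<open>e\<^sub>2\<close>, \<open>l\<close>, \<open>\<beta>\<close>, \<open>g\<close> and a common factor, and \<open>|\<omega>| = g / (l |e\<^sub>1| |e\<^sub>2|)\<close>.\<close>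

unbundle cross3_syntax

section \<open>Integer vectors and cross products\<close>

lemma int_pt_iff: "int_pt x \<longleftrightarrow> x$1 \<in> \<int> \<and> x$2 \<in> \<int> \<and> x$3 \<in> \<int>"
  by (simp add: int_pt_def forall_3)

lemma int_pt_0 [simp]: "int_pt 0"
  and int_pt_axis: "int_pt (axis i 1)"
  and int_pt_add: "int_pt x \<Longrightarrow> int_pt y \<Longrightarrow> int_pt (x + y)"
  and int_pt_diff: "int_pt x \<Longrightarrow> int_pt y \<Longrightarrow> int_pt (x - y)"
  and int_pt_scaleR_of_int: "int_pt x \<Longrightarrow> int_pt (of_int m *\<^sub>R x)"
  and int_pt_cross: "int_pt x \<Longrightarrow> int_pt y \<Longrightarrow> int_pt (x \<times> y)"
  by (auto simp: int_pt_def axis_def cross3_simps)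

lemma inner_int_pt_Ints: "int_pt x \<Longrightarrow> int_pt y \<Longrightarrow> x \<bullet> y \<in> \<int>"
  by (simp add: int_pt_iff inner_vec_def sum_3)

lemma det3_eq_dot_cross: "det3 x y z = x \<bullet> (y \<times> z)"
  by (simp add: det3_def det_transpose dot_cross_det)

lemma det3_int_pt_Ints: "int_pt x \<Longrightarrow> int_pt y \<Longrightarrow> int_pt z \<Longrightarrow> det3 x y z \<in> \<int>"
  by (simp add: det3_eq_dot_cross inner_int_pt_Ints int_pt_cross)

lemma det3_diff_first: "det3 x y z = det3 x (y - x) (z - x)"
  by (simp add: det3_eq_dot_cross cross3_simps)

lemma cross3_eq_0_imp_scaleR:
  assumes "x \<times> y = 0" "x \<noteq> 0"
  obtains c where "y = c *\<^sub>R x"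
proof -
  have "collinear {0, x, y}"
    using assms(1) by (simp add: cross_eq_0)
  then show thesis
    using assms(2) that by (auto simp: collinear_lemma)
qed

lemma cross3_orthogonal_parallel:
  assumes "x \<bullet> n = 0" "y \<bullet> n = 0" "n \<noteq> 0"
  obtains c where "x \<times> y = c *\<^sub>R n"
proof (rule cross3_eq_0_imp_scaleR)
  show "n \<times> (x \<times> y) = 0"
    using assms by (simp add: Lagrange inner_commute)
qed (use assms in auto)

lemma orthogonal_cross_in_span:
  assumes "w \<bullet> (v \<times> u) = 0" "v \<times> u \<noteq> 0"
  obtains a b where "w = a *\<^sub>R v + b *\<^sub>R u"
proof -
  let ?k = "(v \<times> u) \<bullet> (v \<times> u)"
  define a where "a = (u \<bullet> u) * (w \<bullet> v) - (u \<bullet> v) * (w \<bullet> u)"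
  define b where "b = (v \<bullet> v) * (w \<bullet> u) - (u \<bullet> v) * (w \<bullet> v)"
  have "?k *\<^sub>R w = (w \<bullet> (v \<times> u)) *\<^sub>R (v \<times> u) + a *\<^sub>R v + b *\<^sub>R u"
    unfolding a_def b_def
    by (simp add: vec_eq_iff forall_3 cross3_def inner_vec_def sum_3 algebra_simps)
  then have "?k *\<^sub>R w = a *\<^sub>R v + b *\<^sub>R u"
    using assms(1) by simp
  moreover have "?k \<noteq> 0"
    using assms(2) by simp
  ultimately have "w = inverse ?k *\<^sub>R (a *\<^sub>R v + b *\<^sub>R u)"
    by (metis scaleR_scaleR left_inverse scaleR_one)
  then show thesis
    by (intro that[of "inverse ?k * a" "inverse ?k * b"]) (simp add: scaleR_add_right)
qed

lemma det3_unimodular: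
  assumes "int_pt x" "int_pt y" "int_pt z"
    and span: "\<And>w. int_pt w \<Longrightarrow> \<exists>a b c::int. w = of_int a *\<^sub>R x + of_int b *\<^sub>R y + of_int c *\<^sub>R z"
  shows "\<bar>det3 x y z\<bar> = 1"
proof -
  have multilinear: "det3 (a1 *\<^sub>R x + b1 *\<^sub>R y + c1 *\<^sub>R z) (a2 *\<^sub>R x + b2 *\<^sub>R y + c2 *\<^sub>R z)
      (a3 *\<^sub>R x + b3 *\<^sub>R y + c3 *\<^sub>R z) =
      det3 x y z * (a1*b2*c3 - a1*c2*b3 - b1*a2*c3 + b1*c2*a3 + c1*a2*b3 - c1*b2*a3)"
    for a1 b1 c1 a2 b2 c2 a3 b3 c3
    by (simp add: det3_def det_3 transpose_def algebra_simps)
  obtain a1 b1 c1 :: int where e1: "axis 1 1 = of_int a1 *\<^sub>R x + of_int b1 *\<^sub>R y + of_int c1 *\<^sub>R z"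
    using span[OF int_pt_axis] by blast
  obtain a2 b2 c2 :: int where e2: "axis 2 1 = of_int a2 *\<^sub>R x + of_int b2 *\<^sub>R y + of_int c2 *\<^sub>R z"
    using span[OF int_pt_axis] by blast
  obtain a3 b3 c3 :: int where e3: "axis 3 1 = of_int a3 *\<^sub>R x + of_int b3 *\<^sub>R y + of_int c3 *\<^sub>R z"
    using span[OF int_pt_axis] by blast
  obtain d where d: "det3 x y z = of_int d"
    using det3_int_pt_Ints[OF assms(1-3)] by (metis Ints_cases)
  have "det3 (axis 1 1) (axis 2 1) (axis 3 1) = 1"
    by (simp add: det3_def det_3 transpose_def axis_def)
  then have "of_int (d * (a1*b2*c3 - a1*c2*b3 - b1*a2*c3 + b1*c2*a3 + c1*a2*b3 - c1*b2*a3)) = (1::real)"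
    unfolding e1 e2 e3 multilinear d by simp
  then have "d * (a1*b2*c3 - a1*c2*b3 - b1*a2*c3 + b1*c2*a3 + c1*a2*b3 - c1*b2*a3) = 1"
    by (simp only: of_int_eq_1_iff)
  then have "\<bar>d\<bar> = 1"
    by (auto simp: zmult_eq_1_iff)
  then show ?thesis
    using d by simp
qed

section \<open>Primitive vectors\<close>

lemma int_subgroup_principal:
  fixes S :: "int set"
  assumes "a \<in> S" "a \<noteq> 0" and closed: "\<And>x y q. x \<in> S \<Longrightarrow> y \<in> S \<Longrightarrow> x - q * y \<in> S"
  obtains g where "g > 0" "g \<in> S" "\<forall>x\<in>S. g dvd x"
proof -
  have "0 \<in> S"
    using closed[OF assms(1) assms(1), of 1] by simp
  have "\<bar>a\<bar> \<in> S"
    using closed[OF \<open>0 \<in> S\<close> assms(1), of 1] assms(1) by (cases "a \<ge> 0") auto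
  define P where "P k \<longleftrightarrow> k > 0 \<and> int k \<in> S" for k
  have "P (nat \<bar>a\<bar>)"
    using \<open>\<bar>a\<bar> \<in> S\<close> assms(2) by (simp add: P_def)
  then have P_least: "P (LEAST k. P k)"
    by (rule LeastI)
  define g where "g = int (LEAST k. P k)"
  have "g > 0" "g \<in> S"
    using P_least by (simp_all add: g_def P_def)
  moreover have "g dvd x" if "x \<in> S" for x
  proof (rule ccontr)
    assume "\<not> g dvd x"
    have "x mod g \<in> S"
      using closed[OF that \<open>g \<in> S\<close>, of "x div g"] by (simp add: minus_div_mult_eq_mod)
    moreover have "x mod g > 0"
      using \<open>\<not> g dvd x\<close> \<open>g > 0\<close> by (simp add: order_less_le dvd_eq_mod_eq_0)
    ultimately have "P (nat (x mod g))"
      by (simp add: P_def)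
    then have "(LEAST k. P k) \<le> nat (x mod g)"
      by (rule Least_le)
    then have "g \<le> x mod g"
      using \<open>x mod g > 0\<close> by (simp add: g_def le_nat_iff)
    then show False
      using pos_mod_bound[OF \<open>g > 0\<close>, of x] by linarith
  qed
  ultimately show thesis
    using that by blast
qed

text \<open>Primitive integer vectors, i.e. those with coprime coordinates, are characterised here by
  Bezout's identity.\<close>

definition primitive :: "pt \<Rightarrow> bool" where
  "primitive n \<longleftrightarrow> int_pt n \<and> (\<exists>y. int_pt y \<and> n \<bullet> y = 1)"

lemma int_functional_generator:
  assumes closed: "\<And>x y q. x \<in> L \<Longrightarrow> y \<in> L \<Longrightarrow> x - of_int q *\<^sub>R y \<in> L"
    and integral: "\<And>x. x \<in> L \<Longrightarrow> n \<bullet> x \<in> \<int>"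
    and "z \<in> L" "n \<bullet> z \<noteq> 0"
  obtains g u where "g > 0" "u \<in> L" "n \<bullet> u = of_int g"
    "\<forall>x\<in>L. \<exists>m. n \<bullet> x = of_int (g * m)"
proof -
  define S where "S = {i. \<exists>x\<in>L. n \<bullet> x = of_int i}"
  have "n \<bullet> z = of_int \<lfloor>n \<bullet> z\<rfloor>"
    using integral[OF \<open>z \<in> L\<close>] by simp
  then have "\<lfloor>n \<bullet> z\<rfloor> \<in> S" "\<lfloor>n \<bullet> z\<rfloor> \<noteq> 0"
    using \<open>z \<in> L\<close> \<open>n \<bullet> z \<noteq> 0\<close> unfolding S_def by (blast, simp)
  moreover have "x - q * y \<in> S" if xy: "x \<in> S" "y \<in> S" for x y q
  proof -
    obtain zx zy where "zx \<in> L" "n \<bullet> zx = of_int x" "zy \<in> L" "n \<bullet> zy = of_int y"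
      using xy unfolding S_def by blast
    then show ?thesis
      unfolding S_def using closed[of zx zy q]
      by (intro CollectI bexI[of _ "zx - of_int q *\<^sub>R zy"]) (auto simp: inner_diff_right)
  qed
  ultimately obtain g where g: "g > 0" "g \<in> S" "\<forall>x\<in>S. g dvd x"
    by (rule int_subgroup_principal)
  then obtain u where "u \<in> L" "n \<bullet> u = of_int g"
    unfolding S_def by blast
  moreover have "\<exists>m. n \<bullet> x = of_int (g * m)" if "x \<in> L" for x
  proof -
    have "\<lfloor>n \<bullet> x\<rfloor> \<in> S"
      using integral[OF that] that unfolding S_def by auto
    then show ?thesis
      using g(3) integral[OF that] by (metis dvdE of_int_floor)
  qed
  ultimately show thesis
    using g(1) that by blast
qed

lemma primitive_decomposition:
  assumes "int_pt x" "x \<noteq> 0"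
  obtains h n where "h > 0" "primitive n" "x = of_int h *\<^sub>R n"
proof -
  have closed: "a - of_int q *\<^sub>R b \<in> Collect int_pt"
    if "a \<in> Collect int_pt" "b \<in> Collect int_pt" for a b q
    using that by (simp add: int_pt_diff int_pt_scaleR_of_int)
  have integral: "x \<bullet> z \<in> \<int>" if "z \<in> Collect int_pt" for z
    using that assms(1) by (simp add: inner_int_pt_Ints)
  have xL: "x \<in> Collect int_pt" and xx: "x \<bullet> x \<noteq> 0"
    using assms by simp_all
  obtain h u where h: "h > 0" "int_pt u" "x \<bullet> u = of_int h"
    and dvd: "\<forall>z\<in>Collect int_pt. \<exists>m. x \<bullet> z = of_int (h * m)"
    using int_functional_generator[OF closed integral xL xx] by blast
  define n where "n = inverse (of_int h) *\<^sub>R x"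
  have "x $ k / of_int h \<in> \<int>" for k
  proof -
    obtain m where "x \<bullet> axis k 1 = of_int (h * m)"
      using dvd int_pt_axis[of k] by blast
    then show ?thesis
      using h(1) by (simp add: inner_axis)
  qed
  then have "int_pt n"
    unfolding n_def int_pt_def by (simp add: divide_inverse_commute)
  moreover have "n \<bullet> u = 1" "x = of_int h *\<^sub>R n"
    using h unfolding n_def by auto
  ultimately show thesis
    using h that[of h n] unfolding primitive_def by blast
qed

lemma primitive_multiple_Ints:
  assumes "primitive v" "int_pt (t *\<^sub>R v)"
  shows "t \<in> \<int>"
proof -
  obtain y where "int_pt y" "v \<bullet> y = 1"
    using assms(1) unfolding primitive_def by blast
  then show ?thesis
    using inner_int_pt_Ints[OF assms(2), of y] by simp
qed

section \<open>Sublattices defined by a congruence\<close>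

lemma int_span_least:
  assumes "S \<subseteq> T" "0 \<in> T" "\<And>x y. x \<in> T \<Longrightarrow> y \<in> T \<Longrightarrow> x + y \<in> T"
    and "\<And>x m. x \<in> T \<Longrightarrow> of_int m *\<^sub>R x \<in> T"
  shows "int_span S \<subseteq> T"
proof
  fix x assume "x \<in> int_span S"
  then obtain F c where x: "x = (\<Sum>v\<in>F. of_int (c v) *\<^sub>R v)" "finite F" "F \<subseteq> S"
    unfolding int_span_def by blast
  from \<open>finite F\<close> \<open>F \<subseteq> S\<close> have "(\<Sum>v\<in>F. of_int (c v) *\<^sub>R v) \<in> T"
    by (induction F rule: finite_induct) (use assms in auto)
  then show "x \<in> T"
    using x by simp
qed

lemma int_span_add_scaleR:
  assumes "x \<in> S" "y \<in> S"
  shows "x + of_int m *\<^sub>R y \<in> int_span S"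
proof (cases "x = y")
  case True
  then have "x + of_int m *\<^sub>R y = (\<Sum>v\<in>{x}. of_int (1 + m) *\<^sub>R v)"
    by (simp add: algebra_simps)
  then show ?thesis
    unfolding int_span_def using assms
    by (intro CollectI exI[of _ "{x}"] exI[of _ "\<lambda>_. 1 + m"]) simp
next
  case False
  then have "x + of_int m *\<^sub>R y = (\<Sum>v\<in>{x,y}. of_int (if v = x then 1 else m) *\<^sub>R v)"
    by simp
  then show ?thesis
    unfolding int_span_def using assms
    by (intro CollectI exI[of _ "{x, y}"] exI[of _ "\<lambda>v. if v = x then 1 else m"]) simp
qed

definition dvd_lattice :: "pt \<Rightarrow> int \<Rightarrow> pt set" where
  "dvd_lattice n k = {z. int_pt z \<and> (\<exists>m. n \<bullet> z = of_int (k * m))}"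

lemma dvd_lattice_abs: "dvd_lattice n \<bar>k\<bar> = dvd_lattice n k"
proof -
  have "(\<exists>m. r = of_int (\<bar>k\<bar> * m)) \<longleftrightarrow> (\<exists>m. r = of_int (k * m))" for r :: real
    by (metis abs_dvd_iff dvd_def)
  then show ?thesis
    unfolding dvd_lattice_def by simp
qed

lemma int_span_subset_dvd_lattice:
  assumes "S \<subseteq> dvd_lattice n k"
  shows "int_span S \<subseteq> dvd_lattice n k"
proof (rule int_span_least[OF assms])
  show "0 \<in> dvd_lattice n k"
    unfolding dvd_lattice_def by (auto intro: exI[of _ 0])
  show "x + y \<in> dvd_lattice n k" if "x \<in> dvd_lattice n k" "y \<in> dvd_lattice n k" for x y
    using that unfolding dvd_lattice_def
    by (auto simp: int_pt_add inner_add_right intro: exI[of _ "_ + _"] simp flip: distrib_left)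
  show "of_int m *\<^sub>R x \<in> dvd_lattice n k" if "x \<in> dvd_lattice n k" for x m
    using that unfolding dvd_lattice_def
    by (auto simp: int_pt_scaleR_of_int intro: exI[of _ "m * _"])
qed

lemma int_span_eq_dvd_lattice:
  assumes "{z. int_pt z \<and> n \<bullet> z = 0} \<subseteq> S" "S \<subseteq> dvd_lattice n k"
    and "u \<in> S" "n \<bullet> u = of_int k"
  shows "int_span S = dvd_lattice n k"
proof
  show "int_span S \<subseteq> dvd_lattice n k"
    using assms(2) by (rule int_span_subset_dvd_lattice)
  show "dvd_lattice n k \<subseteq> int_span S"
  proof
    fix z assume "z \<in> dvd_lattice n k"
    then obtain m where z: "int_pt z" "n \<bullet> z = of_int (k * m)"
      unfolding dvd_lattice_def by blast
    have "int_pt u"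
      using assms(2,3) unfolding dvd_lattice_def by blast
    then have "z - of_int m *\<^sub>R u \<in> S"
      using z assms(1,4) by (auto simp: int_pt_diff int_pt_scaleR_of_int inner_diff_right)
    then have "(z - of_int m *\<^sub>R u) + of_int m *\<^sub>R u \<in> int_span S"
      using assms(3) by (rule int_span_add_scaleR)
    then show "z \<in> int_span S"
      by simp
  qed
qed

lemma dvd_lattice_diff_iff:
  assumes "int_pt n" "int_pt x" "int_pt y"
  shows "x - y \<in> dvd_lattice n k \<longleftrightarrow> \<lfloor>n \<bullet> x\<rfloor> mod k = \<lfloor>n \<bullet> y\<rfloor> mod k"
proof -
  have "n \<bullet> (x - y) = of_int (\<lfloor>n \<bullet> x\<rfloor> - \<lfloor>n \<bullet> y\<rfloor>)"
    using assms by (simp add: inner_diff_right inner_int_pt_Ints)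
  then show ?thesis
    using assms unfolding dvd_lattice_def mod_eq_dvd_iff dvd_def
    by (simp add: int_pt_diff del: of_int_diff of_int_mult)
qed

lemma lattice_index_dvd_lattice:
  assumes "primitive n" "k > 0"
  shows "lattice_index (dvd_lattice n k) (Collect int_pt) = nat k"
proof -
  obtain y where y: "int_pt y" "n \<bullet> y = 1" and "int_pt n"
    using assms(1) unfolding primitive_def by blast
  let ?coset = "\<lambda>x. {x' \<in> Collect int_pt. x - x' \<in> dvd_lattice n k}"
  define D where "D r = {x. int_pt x \<and> \<lfloor>n \<bullet> x\<rfloor> mod k = r}" for r
  have coset: "?coset x = D (\<lfloor>n \<bullet> x\<rfloor> mod k)" if "int_pt x" for x
    using dvd_lattice_diff_iff[OF \<open>int_pt n\<close> that] unfolding D_def by auto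
  have residue: "\<lfloor>n \<bullet> (of_int r *\<^sub>R y)\<rfloor> = r" for r
    using y by simp
  have "?coset ` Collect int_pt = D ` {0..<k}"
  proof (intro equalityI subsetI)
    fix C assume "C \<in> ?coset ` Collect int_pt"
    then show "C \<in> D ` {0..<k}"
      using coset assms(2) by auto
  next
    fix C assume "C \<in> D ` {0..<k}"
    then obtain r where "r \<in> {0..<k}" "C = D r"
      by blast
    then have "C = ?coset (of_int r *\<^sub>R y)"
      using coset[of "of_int r *\<^sub>R y"] y(1) residue by (simp add: int_pt_scaleR_of_int)
    then show "C \<in> ?coset ` Collect int_pt"
      using y(1) by (auto simp: int_pt_scaleR_of_int)
  qed
  moreover have "inj_on D {0..<k}"
  proof
    fix r r' assume "r \<in> {0..<k}" "r' \<in> {0..<k}" "D r = D r'"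
    have "of_int r *\<^sub>R y \<in> D r"
      using y(1) residue \<open>r \<in> {0..<k}\<close> unfolding D_def by (simp add: int_pt_scaleR_of_int)
    then have "r mod k = r'"
      using \<open>D r = D r'\<close> residue unfolding D_def by simp
    then show "r = r'"
      using \<open>r \<in> {0..<k}\<close> by simp
  qed
  ultimately show ?thesis
    unfolding lattice_index_def by (simp add: card_image)
qed

section \<open>Integer planes and their invariants\<close>

lemma integer_plane_obtain_int_pt:
  assumes "integer_plane P"
  obtains q where "q \<in> P" "int_pt q"
proof -
  have "P \<noteq> {}"
    using assms unfolding integer_plane_def by auto
  then have "{x \<in> P. int_pt x} \<noteq> {}"
    using assms unfolding integer_plane_def by (metis affine_hull_empty)
  then show thesis
    using that by blast
qed

lemma integer_plane_int_normal:
  assumes "integer_plane P"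
  obtains N q where "int_pt N" "N \<noteq> 0" "int_pt q" "P = {x. N \<bullet> x = N \<bullet> q}"
proof -
  have P: "affine P" "aff_dim P = 2" "affine hull {x \<in> P. int_pt x} = P"
    using assms unfolding integer_plane_def by auto
  obtain B where B: "B \<subseteq> {x \<in> P. int_pt x}" "\<not> affine_dependent B"
      "affine hull {x \<in> P. int_pt x} = affine hull B"
    using affine_basis_exists by blast
  have "aff_dim B = 2"
    using B(3) P by (metis aff_dim_affine_hull)
  then have "card B = 3"
    using aff_dim_affine_independent[OF B(2)] by simp
  then obtain q0 q1 q2 where q: "B = {q0, q1, q2}" "q0 \<noteq> q1" "q1 \<noteq> q2" "q0 \<noteq> q2"
    by (auto simp: card_3_iff)
  have q_int: "int_pt q0" "int_pt q1" "int_pt q2" and "q0 \<in> P"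
    using B(1) q by auto
  define N where "N = (q1 - q0) \<times> (q2 - q0)"
  define H where "H = {x. N \<bullet> x = N \<bullet> q0}"
  have "int_pt N"
    using q_int unfolding N_def by (simp add: int_pt_cross int_pt_diff)
  have "\<not> collinear {q1, q0, q2}"
    using B(2) q collinear_3_eq_affine_dependent by (metis insert_commute)
  then have "N \<noteq> 0"
    unfolding N_def by (simp add: cross_eq_0 collinear_3)
  have "N \<bullet> (q1 - q0) = 0" "N \<bullet> (q2 - q0) = 0"
    unfolding N_def using dot_cross_self(1,3)[of "q1 - q0" "q2 - q0"] by (simp_all add: inner_commute)
  then have "B \<subseteq> H"
    using q unfolding H_def by (auto simp: inner_diff_right)
  then have "P \<subseteq> H"
    using B(3) P(3) affine_hyperplane unfolding H_def by (metis hull_minimal)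
  moreover have "aff_dim H = 2"
    using \<open>N \<noteq> 0\<close> unfolding H_def by simp
  ultimately have "P = H"
    using affine_dim_equal[OF P(1) _ _ \<open>P \<subseteq> H\<close>] affine_hyperplane \<open>q0 \<in> P\<close> P(2)
    unfolding H_def by auto
  then show thesis
    using that \<open>int_pt N\<close> \<open>N \<noteq> 0\<close> q_int(1) unfolding H_def by blast
qed

lemma integer_plane_primitive_normal:
  assumes "integer_plane P"
  obtains n e where "primitive n" "P = {x. n \<bullet> x = of_int e}"
proof -
  obtain N q where N: "int_pt N" "N \<noteq> 0" "int_pt q" "P = {x. N \<bullet> x = N \<bullet> q}"
    using assms by (rule integer_plane_int_normal)
  obtain h n where hn: "h > 0" "primitive n" "N = of_int h *\<^sub>R n"
    using N(1,2) by (rule primitive_decomposition)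
  have "n \<bullet> q \<in> \<int>"
    using hn(2) N(3) unfolding primitive_def by (blast intro: inner_int_pt_Ints)
  then obtain e where "n \<bullet> q = of_int e"
    by (metis Ints_cases)
  moreover have "P = {x. n \<bullet> x = n \<bullet> q}"
    using N(4) hn(1,3) by simp
  ultimately show thesis
    using hn(2) that by simp
qed

lemma int_vecs_hyperplane:
  assumes "integer_plane P" "P = {x. n \<bullet> x = d}"
  shows "int_vecs P = {z. int_pt z \<and> n \<bullet> z = 0}"
proof
  show "int_vecs P \<subseteq> {z. int_pt z \<and> n \<bullet> z = 0}"
    unfolding int_vecs_def using assms(2) by (auto simp: int_pt_diff inner_diff_right)
  obtain q where "q \<in> P" "int_pt q"
    using assms(1) by (rule integer_plane_obtain_int_pt)
  show "{z. int_pt z \<and> n \<bullet> z = 0} \<subseteq> int_vecs P"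
  proof
    fix z assume "z \<in> {z. int_pt z \<and> n \<bullet> z = 0}"
    then have "q + z \<in> P" "int_pt (q + z)"
      using \<open>q \<in> P\<close> \<open>int_pt q\<close> assms(2) by (auto simp: inner_add_right int_pt_add)
    then show "z \<in> int_vecs P"
      unfolding int_vecs_def using \<open>q \<in> P\<close> \<open>int_pt q\<close>
      by (intro CollectI exI[of _ "q + z"] exI[of _ q]) simp
  qed
qed

lemma int_vecs_UNIV: "int_vecs UNIV = Collect int_pt"
proof -
  have "z = z - 0" for z :: pt
    by simp
  then show ?thesis
    unfolding int_vecs_def using int_pt_0 int_pt_diff by blast
qed

lemma affine_hull_insert_plane:
  fixes P :: "pt set"
  assumes "affine P" "aff_dim P = 2" "x \<notin> P"
  shows "affine hull (insert x P) = UNIV"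
proof -
  have "aff_dim (insert x P) = 3"
    using assms by (simp add: aff_dim_insert hull_same)
  then show ?thesis
    using aff_dim_eq_full[of "insert x P"] by simp
qed

lemma hyperplane_direction_orthogonal:
  assumes "p1 \<in> {x. n \<bullet> x = e}" "p2 \<in> {x. n \<bullet> x = e}" "p2 - p1 = l *\<^sub>R v" "l \<noteq> 0"
  shows "n \<bullet> v = 0"
proof -
  have "l * (n \<bullet> v) = n \<bullet> (p2 - p1)"
    using assms(3) by simp
  then show ?thesis
    using assms(1,2,4) by (simp add: inner_diff_right)
qed

lemma hyperplanes_cross_nonzero:
  assumes "P1 = {x. n1 \<bullet> x = e1}" "P2 = {x. n2 \<bullet> x = e2}" "n1 \<noteq> 0" "n2 \<noteq> 0"
    and "p \<in> P1 \<inter> P2" "P1 \<noteq> P2"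
  shows "n1 \<times> n2 \<noteq> 0"
proof
  assume "n1 \<times> n2 = 0"
  then have "n2 \<times> n1 = 0"
    using cross_skew[of n2 n1] by simp
  then obtain c where c: "n1 = c *\<^sub>R n2"
    using assms(4) by (rule cross3_eq_0_imp_scaleR)
  then have "c \<noteq> 0"
    using assms(3) by auto
  moreover have "e1 = c * e2"
    using assms(1,2,5) c by auto
  ultimately have "P1 = P2"
    unfolding assms(1,2) c by auto
  then show False
    using assms(6) by contradiction
qed

lemma int_dist_origin_hyperplane:
  assumes "integer_plane P" "0 \<notin> P" "primitive n" "P = {x. n \<bullet> x = of_int e}"
  shows "int_dist 0 P = nat \<bar>e\<bar>"
proof -
  have "e \<noteq> 0"
    using assms(2,4) by auto
  obtain q where q: "q \<in> P" "int_pt q"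
    using assms(1) by (rule integer_plane_obtain_int_pt)
  have hull: "affine hull (insert 0 P) = UNIV"
    using assms(1,2) unfolding integer_plane_def by (simp add: affine_hull_insert_plane)
  have "int_span (int_vecs (insert 0 P)) = dvd_lattice n e"
  proof (rule int_span_eq_dvd_lattice)
    show "{z. int_pt z \<and> n \<bullet> z = 0} \<subseteq> int_vecs (insert 0 P)"
      unfolding int_vecs_hyperplane[OF assms(1,4), symmetric] int_vecs_def by blast
    show "int_vecs (insert 0 P) \<subseteq> dvd_lattice n e"
    proof
      fix z assume "z \<in> int_vecs (insert 0 P)"
      then obtain a b where ab: "z = a - b" "a \<in> insert 0 P" "b \<in> insert 0 P" "int_pt a" "int_pt b"
        unfolding int_vecs_def by blast
      have "\<exists>i. n \<bullet> y = of_int (e * i)" if "y \<in> insert 0 P" for y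
        using that assms(4) by (auto intro: exI[of _ 0] exI[of _ 1])
      then obtain i j where "n \<bullet> a = of_int (e * i)" "n \<bullet> b = of_int (e * j)"
        using ab by blast
      then have "n \<bullet> z = of_int (e * (i - j))"
        by (simp add: ab(1) inner_diff_right algebra_simps)
      then show "z \<in> dvd_lattice n e"
        unfolding dvd_lattice_def using ab by (blast intro: int_pt_diff)
    qed
    show "q \<in> int_vecs (insert 0 P)"
      unfolding int_vecs_def using q by (intro CollectI exI[of _ q] exI[of _ 0]) simp
    show "n \<bullet> q = of_int e"
      using q assms(4) by simp
  qed
  then show ?thesis
    unfolding int_dist_def hull int_vecs_UNIV dvd_lattice_abs[of n e, symmetric]
    using lattice_index_dvd_lattice[OF assms(3)] \<open>e \<noteq> 0\<close> by simp
qed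

lemma int_pts_open_segment_primitive:
  assumes "primitive v" "p2 - p1 = of_int l *\<^sub>R v" "l > 0" "int_pt p1"
  shows "{x \<in> open_segment p1 p2. int_pt x} = (\<lambda>j. p1 + of_int j *\<^sub>R v) ` {1..<l}"
proof -
  have v: "int_pt v" "v \<noteq> 0"
    using assms(1) unfolding primitive_def by auto
  have p2: "p2 = p1 + of_int l *\<^sub>R v"
    using assms(2) by (simp add: algebra_simps)
  show ?thesis
  proof (intro equalityI subsetI)
    fix x assume x: "x \<in> {x \<in> open_segment p1 p2. int_pt x}"
    then obtain t where t: "0 < t" "t < 1" "x = p1 + (t * of_int l) *\<^sub>R v"
      by (auto simp: in_segment p2 algebra_simps)
    have "int_pt ((t * of_int l) *\<^sub>R v)"
      using x assms(4) t(3) int_pt_diff[of x p1] by simp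
    then obtain j where j: "t * of_int l = of_int j"
      using primitive_multiple_Ints[OF assms(1)] by (metis Ints_cases)
    have "0 < t * of_int l" "t * of_int l < of_int l"
      using t assms(3) by auto
    then have "j \<in> {1..<l}"
      using j by auto
    then show "x \<in> (\<lambda>j. p1 + of_int j *\<^sub>R v) ` {1..<l}"
      using t(3) j by auto
  next
    fix x assume "x \<in> (\<lambda>j. p1 + of_int j *\<^sub>R v) ` {1..<l}"
    then obtain j where j: "j \<in> {1..<l}" "x = p1 + of_int j *\<^sub>R v"
      by blast
    define t where "t = (of_int j / of_int l :: real)"
    have "0 < t" "t < 1" "x = (1 - t) *\<^sub>R p1 + t *\<^sub>R p2"
      using j assms(3) unfolding t_def p2 by (auto simp: algebra_simps)
    moreover have "p1 \<noteq> p2"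
      using p2 v(2) assms(3) by auto
    ultimately have "x \<in> open_segment p1 p2"
      by (auto simp: in_segment)
    moreover have "int_pt x"
      using j(2) assms(4) v(1) by (simp add: int_pt_add int_pt_scaleR_of_int)
    ultimately show "x \<in> {x \<in> open_segment p1 p2. int_pt x}"
      by blast
  qed
qed

lemma int_length_primitive:
  assumes "primitive v" "p2 - p1 = of_int l *\<^sub>R v" "l > 0" "int_pt p1"
  shows "int_length p1 p2 = nat l"
proof -
  have "v \<noteq> 0"
    using assms(1) unfolding primitive_def by auto
  then have "inj_on (\<lambda>j. p1 + of_int j *\<^sub>R v) {1..<l}"
    by (auto simp: inj_on_def)
  then show ?thesis
    unfolding int_length_def int_pts_open_segment_primitive[OF assms] using assms(3)
    by (simp add: card_image)
qed

lemma int_sin_hyperplanes: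
  assumes "integer_plane P1" "integer_plane P2" "\<not> P2 \<subseteq> P1"
    and "primitive n1" "P1 = {x. n1 \<bullet> x = d1}" "P2 = {x. n2 \<bullet> x = d2}"
    and "g > 0" "int_pt u" "n2 \<bullet> u = 0" "n1 \<bullet> u = of_int g"
    and "{z. int_pt z \<and> n2 \<bullet> z = 0} \<subseteq> dvd_lattice n1 g"
  shows "int_sin P1 P2 = nat g"
proof -
  obtain p where "p \<in> P2" "p \<notin> P1"
    using assms(3) by blast
  then have "affine hull (insert p P1) = UNIV"
    using assms(1) unfolding integer_plane_def by (simp add: affine_hull_insert_plane)
  moreover have "insert p P1 \<subseteq> P1 \<union> P2"
    using \<open>p \<in> P2\<close> by blast
  ultimately have hull: "affine hull (P1 \<union> P2) = UNIV"
    by (metis hull_mono top.extremum_uniqueI)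
  have V1: "int_vecs P1 = {z. int_pt z \<and> n1 \<bullet> z = 0}"
    using assms(1,5) by (rule int_vecs_hyperplane)
  have V2: "int_vecs P2 = {z. int_pt z \<and> n2 \<bullet> z = 0}"
    using assms(2,6) by (rule int_vecs_hyperplane)
  have "int_span (int_vecs P1 \<union> int_vecs P2) = dvd_lattice n1 g"
  proof (rule int_span_eq_dvd_lattice)
    show "{z. int_pt z \<and> n1 \<bullet> z = 0} \<subseteq> int_vecs P1 \<union> int_vecs P2"
      unfolding V1 by blast
    show "int_vecs P1 \<union> int_vecs P2 \<subseteq> dvd_lattice n1 g"
      unfolding V1 V2 using assms(11) by (auto simp: dvd_lattice_def intro: exI[of _ 0])
    show "u \<in> int_vecs P1 \<union> int_vecs P2"
      unfolding V2 using assms(8,9) by blast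
  qed (rule assms(10))
  then show ?thesis
    unfolding int_sin_def hull int_vecs_UNIV
    using lattice_index_dvd_lattice[OF assms(4)] assms(7) by simp
qed

section \<open>The integer vectors of the second plane\<close>

lemma two_plane_lattice_generator:
  assumes "int_pt n1" "int_pt n2" "n1 \<times> n2 \<noteq> 0"
  obtains g u where "g > 0" "int_pt u" "n2 \<bullet> u = 0" "n1 \<bullet> u = of_int g"
    "{z. int_pt z \<and> n2 \<bullet> z = 0} \<subseteq> dvd_lattice n1 g"
proof -
  let ?L = "{z. int_pt z \<and> n2 \<bullet> z = 0}"
  have closed: "a - of_int q *\<^sub>R b \<in> ?L" if "a \<in> ?L" "b \<in> ?L" for a b q
    using that by (simp add: int_pt_diff int_pt_scaleR_of_int inner_diff_right)
  have integral: "n1 \<bullet> z \<in> \<int>" if "z \<in> ?L" for z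
    using that assms(1) by (simp add: inner_int_pt_Ints)
  let ?z = "n2 \<times> (n1 \<times> n2)"
  have zL: "?z \<in> ?L"
    using assms by (simp add: int_pt_cross dot_cross_self)
  have "n1 \<bullet> ?z = (n1 \<times> n2) \<bullet> (n1 \<times> n2)"
    using cross_triple[of n1 n2 "n1 \<times> n2"] by (simp add: inner_commute)
  then have zn: "n1 \<bullet> ?z \<noteq> 0"
    using assms(3) by simp
  obtain g u where "g > 0" "u \<in> ?L" "n1 \<bullet> u = of_int g"
    and "\<forall>z\<in>?L. \<exists>m. n1 \<bullet> z = of_int (g * m)"
    using int_functional_generator[OF closed integral zL zn] by blast
  then show thesis
    using that unfolding dvd_lattice_def by blast
qed

lemma line_lattice_multiple_primitive:
  assumes "n1 \<times> n2 \<noteq> 0" "primitive v" "n1 \<bullet> v = 0" "n2 \<bullet> v = 0"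
    and "int_pt x" "n1 \<bullet> x = 0" "n2 \<bullet> x = 0"
  obtains t :: int where "x = of_int t *\<^sub>R v"
proof -
  have parallel: "(n1 \<times> n2) \<times> y = 0" if "n1 \<bullet> y = 0" "n2 \<bullet> y = 0" for y
    using that Lagrange[of y n1 n2] cross_skew[of y "n1 \<times> n2"] by (simp add: inner_commute)
  obtain a where a: "x = a *\<^sub>R (n1 \<times> n2)"
    using cross3_eq_0_imp_scaleR[OF parallel[OF assms(6,7)] assms(1)] by blast
  obtain b where b: "v = b *\<^sub>R (n1 \<times> n2)"
    using cross3_eq_0_imp_scaleR[OF parallel[OF assms(3,4)] assms(1)] by blast
  have "b \<noteq> 0"
    using b assms(2) unfolding primitive_def by auto
  then have x: "x = (a / b) *\<^sub>R v"
    using a b by simp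
  then have "a / b \<in> \<int>"
    using primitive_multiple_Ints[OF assms(2)] assms(5) by simp
  then show thesis
    using x that by (metis Ints_cases)
qed

lemma two_plane_lattice_basis:
  assumes "n1 \<times> n2 \<noteq> 0" "primitive v" "n1 \<bullet> v = 0" "n2 \<bullet> v = 0"
    and "int_pt u" "n2 \<bullet> u = 0" "n1 \<bullet> u = of_int g"
    and "{z. int_pt z \<and> n2 \<bullet> z = 0} \<subseteq> dvd_lattice n1 g"
    and "int_pt z" "n2 \<bullet> z = 0"
  obtains a b :: int where "z = of_int a *\<^sub>R v + of_int b *\<^sub>R u"
proof -
  obtain m where m: "n1 \<bullet> z = of_int (g * m)"
    using assms(8-10) unfolding dvd_lattice_def by blast
  have "int_pt (z - of_int m *\<^sub>R u)" "n1 \<bullet> (z - of_int m *\<^sub>R u) = 0"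
    "n2 \<bullet> (z - of_int m *\<^sub>R u) = 0"
    using assms(5-7,9,10) m by (simp_all add: int_pt_diff int_pt_scaleR_of_int inner_diff_right)
  then obtain t where "z - of_int m *\<^sub>R u = of_int t *\<^sub>R v"
    using line_lattice_multiple_primitive[OF assms(1-4)] by blast
  then have "z = of_int t *\<^sub>R v + of_int m *\<^sub>R u"
    by (simp add: algebra_simps)
  then show thesis
    by (rule that)
qed

lemma lattice_basis_cross_primitive:
  assumes "primitive n" "int_pt v" "int_pt u" "n \<bullet> v = 0" "n \<bullet> u = 0"
    and basis: "\<And>z. int_pt z \<Longrightarrow> n \<bullet> z = 0 \<Longrightarrow> \<exists>a b::int. z = of_int a *\<^sub>R v + of_int b *\<^sub>R u"
  shows "v \<times> u = n \<or> v \<times> u = - n"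
proof -
  obtain y where y: "int_pt y" "n \<bullet> y = 1" and "int_pt n"
    using assms(1) unfolding primitive_def by blast
  have "\<exists>a b c::int. w = of_int a *\<^sub>R v + of_int b *\<^sub>R u + of_int c *\<^sub>R y" if "int_pt w" for w
  proof -
    have "n \<bullet> w \<in> \<int>"
      using \<open>int_pt n\<close> that by (rule inner_int_pt_Ints)
    then obtain c where c: "n \<bullet> w = of_int c"
      by (metis Ints_cases)
    have "int_pt (w - of_int c *\<^sub>R y)" "n \<bullet> (w - of_int c *\<^sub>R y) = 0"
      using that y c by (simp_all add: int_pt_diff int_pt_scaleR_of_int inner_diff_right)
    then obtain a b :: int where "w - of_int c *\<^sub>R y = of_int a *\<^sub>R v + of_int b *\<^sub>R u"
      using basis by blast
    then show ?thesis
      by (metis diff_eq_eq)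
  qed
  then have "\<bar>det3 v u y\<bar> = 1"
    using det3_unimodular assms(2,3) y(1) by blast
  have "v \<bullet> n = 0" "u \<bullet> n = 0" "n \<noteq> 0"
    using assms(4,5) y(2) by (auto simp: inner_commute)
  then obtain t where t: "v \<times> u = t *\<^sub>R n"
    by (rule cross3_orthogonal_parallel)
  then have "det3 v u y = t"
    using cross_triple[of v u y] y(2) by (simp add: det3_eq_dot_cross inner_commute)
  then show ?thesis
    using t \<open>\<bar>det3 v u y\<bar> = 1\<close> by (auto simp: abs_if split: if_splits)
qed

lemma two_plane_lattice:
  assumes "primitive n1" "primitive n2" "n1 \<times> n2 \<noteq> 0"
    and "primitive v" "n1 \<bullet> v = 0" "n2 \<bullet> v = 0"
  obtains g u where "g > 0" "int_pt u" "n2 \<bullet> u = 0" "n1 \<bullet> u = of_int g"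
    "{z. int_pt z \<and> n2 \<bullet> z = 0} \<subseteq> dvd_lattice n1 g" "v \<times> u = n2 \<or> v \<times> u = - n2"
proof -
  have "int_pt n1" "int_pt n2" "int_pt v"
    using assms(1,2,4) unfolding primitive_def by blast+
  obtain g u where gu: "g > 0" "int_pt u" "n2 \<bullet> u = 0" "n1 \<bullet> u = of_int g"
    and lattice: "{z. int_pt z \<and> n2 \<bullet> z = 0} \<subseteq> dvd_lattice n1 g"
    using two_plane_lattice_generator[OF \<open>int_pt n1\<close> \<open>int_pt n2\<close> assms(3)] by blast
  have "\<exists>a b::int. z = of_int a *\<^sub>R v + of_int b *\<^sub>R u" if "int_pt z" "n2 \<bullet> z = 0" for z
    using two_plane_lattice_basis[OF assms(3-6) gu(2-4) lattice that] by blast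
  then have "v \<times> u = n2 \<or> v \<times> u = - n2"
    using lattice_basis_cross_primitive[OF assms(2) \<open>int_pt v\<close> gu(2) assms(6) gu(3)] by blast
  then show thesis
    using gu lattice that by blast
qed

section \<open>The determinant ratio\<close>

lemma omega_two_planes:
  assumes P1: "P1 = {x. n1 \<bullet> x = e1}" and P2: "P2 = {x. n2 \<bullet> x = e2}"
    and "p1 \<in> P1 \<inter> P2" "p2 \<in> P1 \<inter> P2" "p3 \<in> P1 - P2" "p4 \<in> P2 - P1"
    and "p2 - p1 = l *\<^sub>R v" "l \<noteq> 0" "n1 \<bullet> u = g" "v \<times> u = n2 \<or> v \<times> u = - n2"
  shows "\<bar>omega p1 p2 p3 p4\<bar> = \<bar>g / (l * e1 * e2)\<bar>"
proof -
  define a b w where "a = p2 - p1" and "b = p3 - p1" and "w = p4 - p1"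
  have orth: "n1 \<bullet> a = 0" "n1 \<bullet> b = 0" "n2 \<bullet> a = 0" "n2 \<bullet> w = 0"
    and off: "n2 \<bullet> b \<noteq> 0" "n1 \<bullet> w \<noteq> 0"
    using assms(3-6) unfolding P1 P2 a_def b_def w_def by (auto simp: inner_diff_right)
  obtain s where s: "v \<times> u = s *\<^sub>R n2" "\<bar>s\<bar> = 1"
    using assms(10) by (metis abs_1 abs_minus scaleR_minus1_left scaleR_one)
  have "n1 \<noteq> 0" "n2 \<noteq> 0" "a \<noteq> 0"
    using off orth assms(7,8) s by (auto simp: a_def)
  have "n1 \<bullet> v = 0"
    using assms(3,4,7,8) unfolding P1 by (intro hyperplane_direction_orthogonal) auto
  obtain \<mu> where \<mu>: "a \<times> b = \<mu> *\<^sub>R n1"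
    using cross3_orthogonal_parallel[of a n1 b] orth(1,2) \<open>n1 \<noteq> 0\<close>
    by (auto simp: inner_commute)
  have "\<mu> \<noteq> 0"
  proof
    assume "\<mu> = 0"
    then obtain c where "b = c *\<^sub>R a"
      using \<mu> \<open>a \<noteq> 0\<close> by (auto elim: cross3_eq_0_imp_scaleR)
    then show False
      using off(1) orth(3) by simp
  qed
  have "w \<bullet> (v \<times> u) = 0" "v \<times> u \<noteq> 0"
    using s orth(4) \<open>n2 \<noteq> 0\<close> by (auto simp: inner_commute)
  then obtain \<alpha> \<beta> where w: "w = \<alpha> *\<^sub>R v + \<beta> *\<^sub>R u"
    by (rule orthogonal_cross_in_span)
  have n1w: "n1 \<bullet> w = \<beta> * g"
    using \<open>n1 \<bullet> v = 0\<close> assms(9) by (simp add: w inner_add_right)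
  have aw: "a \<times> w = (l * \<beta> * s) *\<^sub>R n2"
    using s(1) by (simp add: a_def assms(7) w cross_add_right cross_mult_left cross_mult_right)
  have "omega p1 p2 p3 p4 = det3 a b w / (det3 p1 a b * det3 p1 a w)"
    unfolding omega_def a_def b_def w_def
    using det3_diff_first[of p1 p2 p3] det3_diff_first[of p1 p2 p4] by simp
  also have "det3 a b w = \<mu> * (n1 \<bullet> w)"
    using cross_triple[of a b w] \<mu> by (simp add: det3_eq_dot_cross inner_commute)
  also have "det3 p1 a b = \<mu> * e1"
    using \<mu> assms(3) P1 by (simp add: det3_eq_dot_cross inner_commute)
  also have "det3 p1 a w = l * \<beta> * s * e2"
    using aw assms(3) P2 by (simp add: det3_eq_dot_cross inner_commute)
  finally have "omega p1 p2 p3 p4 = g / (s * (l * e1 * e2))"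
    using \<open>\<mu> \<noteq> 0\<close> off(2) n1w by (simp add: field_simps)
  then show ?thesis
    using s(2) by (simp add: abs_mult)
qed

theorem proposition4p3:
  fixes p1 p2 p3 p4 :: "real^3" and P1 P2 :: "(real^3) set"
  assumes "int_pt p1" and "int_pt p2" and "p1 \<noteq> p2"
    and "integer_plane P1" and "integer_plane P2" and "P1 \<noteq> P2"
    and "affine hull {p1, p2} \<subseteq> P1" and "affine hull {p1, p2} \<subseteq> P2"
    and "0 \<notin> P1" and "0 \<notin> P2"
    and "p3 \<in> P1 - P2" and "p4 \<in> P2 - P1"
  shows "\<bar>omega p1 p2 p3 p4\<bar> =
    real (int_sin P1 P2) /
      (real (int_length p1 p2) * real (int_dist 0 P1) * real (int_dist 0 P2))"
proof -
  obtain n1 e1 where n1: "primitive n1" "P1 = {x. n1 \<bullet> x = of_int e1}"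
    using assms(4) by (rule integer_plane_primitive_normal)
  obtain n2 e2 where n2: "primitive n2" "P2 = {x. n2 \<bullet> x = of_int e2}"
    using assms(5) by (rule integer_plane_primitive_normal)
  have p12: "p1 \<in> P1 \<inter> P2" "p2 \<in> P1 \<inter> P2"
    using assms(7,8) hull_subset[of "{p1, p2}" affine] by auto
  obtain l v where lv: "l > 0" "primitive v" "p2 - p1 = of_int l *\<^sub>R v"
    using primitive_decomposition[of "p2 - p1"] assms(1-3) by (auto simp: int_pt_diff)
  have "n1 \<bullet> v = 0" "n2 \<bullet> v = 0"
    using p12 lv(1,3) n1(2) n2(2) by (auto intro: hyperplane_direction_orthogonal)
  moreover have "n1 \<times> n2 \<noteq> 0"
    using n1 n2 p12 assms(6) by (intro hyperplanes_cross_nonzero) (auto simp: primitive_def)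
  ultimately obtain g u where gu: "g > 0" "int_pt u" "n2 \<bullet> u = 0" "n1 \<bullet> u = of_int g"
    and lattice2: "{z. int_pt z \<and> n2 \<bullet> z = 0} \<subseteq> dvd_lattice n1 g"
    and cross: "v \<times> u = n2 \<or> v \<times> u = - n2"
    using two_plane_lattice[OF n1(1) n2(1) _ lv(2)] by blast
  have "\<bar>omega p1 p2 p3 p4\<bar> = \<bar>of_int g / (of_int l * of_int e1 * of_int e2)\<bar>"
    using omega_two_planes[OF n1(2) n2(2) p12 assms(11,12) lv(3) _ gu(4) cross] lv(1) by simp
  moreover have "int_sin P1 P2 = nat g"
    using int_sin_hyperplanes[OF assms(4,5) _ n1 n2(2) gu lattice2] assms(12) by blast
  moreover have "int_length p1 p2 = nat l"
    using lv(2,3,1) assms(1) by (rule int_length_primitive)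
  moreover have "int_dist 0 P1 = nat \<bar>e1\<bar>" "int_dist 0 P2 = nat \<bar>e2\<bar>"
    using int_dist_origin_hyperplane assms(4,5,9,10) n1 n2 by auto
  ultimately show ?thesis
    using gu(1) lv(1) by (simp add: abs_mult)
qed

end
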